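(* Under the standing setting and the standing parameter choice described in the context, let $\{\hat\omega^k\}=\{(x^k,\xi^k,\hat x^k,\xi^{k-1})\}$ be generated by iBPDCA and assume it is bounded. For each $k$ define $\upsilon^{k+1}=(\upsilon^{k+1}_x,\upsilon^{k+1}_\xi,\upsilon^{k+1}_{\hat x},\upsilon^{k+1}_\zeta)$ by $\upsilon^{k+1}_{x}=\nabla h^-(\hat{x}^k)-\nabla h^-(x^{k+1})+2\delta(x^{k+1}-\hat{x}^{k+1})-\tau(\nabla\psi(x^{k+1})-\nabla\psi(\hat{x}^k))$, $\upsilon^{k+1}_{\xi}=\hat{x}^k-x^k+\frac{1}{\alpha_{k+1}}(x^{k+1}-\hat{x}^{k+1})+(2\eta-\beta)(\xi^{k+1}-\xi^k)$, $\upsilon^{k+1}_{\hat{x}}=-2\delta(x^{k+1}-\hat{x}^{k+1})$, $\upsilon^{k+1}_{\zeta}=2\eta(\xi^{k}-\xi^{k+1})$. Then $\upsilon^{k+1}\in\partial\hat\Theta(\hat\omega^{k+1})$, and there exists $\theta>0$ such that for all $k$ $$\operatorname{dist}(0,\partial \hat{\Theta}(\hat{\omega}^{k+1}))\leq \theta\big(\|x^{k}-\hat{x}^{k}\|+\|x^{k+1}-\hat{x}^{k+1}\|+\|\xi^{k+1}-\xi^k\| \big).$$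
   Context: Problem: minimize $\Phi(x)=f(x)-g(x)+h(x)$ over $x\in\mathbb{R}^n$, where: $f:\mathbb{R}^n\to(-\infty,\infty]$ is proper, lower semicontinuous and convex; $g:\mathbb{R}^n\to\mathbb{R}$ is convex and continuous; $h=h^+-h^-$ where $h^+,h^-:\mathbb{R}^n\to\mathbb{R}$ are differentiable with Lipschitz continuous gradients of moduli $L_h^+$ and $L_h^-$ respectively (not necessarily convex); and $\inf_x\Phi(x)>-\infty$. $g^*$ is the convex conjugate of $g$. Kernel: $\psi:\mathbb{R}^n\to\mathbb{R}$ is differentiable, $\rho$-strongly convex ($\rho>0$), with $\nabla\psi$ Lipschitz continuous with modulus $L_\psi$; $\mathscr{B}_\psi(x,y)=\psi(x)-\psi(y)-\langle\nabla\psi(y),x-y\rangle$. Algorithm (iBPDCA): choose $x^0,\xi^0\in\mathbb{R}^n$, set $x^{-1}=x^0$, $\{\alpha_k\}\subseteq[\alpha_{\min},1]$ with $0<\alpha_{\min}<1$, $\beta>1/2$, $\tau>0$. For $k=0,1,\dots$: $\hat x^k=x^k+\alpha_k(x^k-x^{k-1})$; $\xi^{k+1}=\arg\min_{\xi}\{g^*(\xi)-\langle\hat x^k,\xi\rangle+\frac{\beta}{2}\|\xi-\xi^k\|^2\}$; $x^{k+1}\in\arg\min_{x}\{f(x)+h^+(x)-\langle x-\hat x^k,\ \xi^{k+1}+\nabla h^-(\hat x^k)\rangle+\tau\mathscr{B}_\psi(x,\hat x^k)\}$ (assumed to exist). $\Theta(x,\xi)=f(x)+g^*(\xi)-\langle\xi,x\rangle+h^+(x)-h^-(x)$;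 merit function $\hat\Theta(x,\xi,\hat x,\zeta)=\Theta(x,\xi)+\delta\|x-\hat x\|^2+\eta\|\xi-\zeta\|^2$ on $\mathbb{R}^n\times\mathbb{R}^n\times\mathbb{R}^n\times\mathbb{R}^n$; $\hat\omega^k=(x^k,\xi^k,\hat x^k,\xi^{k-1})$. $\partial$ denotes the limiting (Mordukhovich) subdifferential, and $\operatorname{dist}(0,S)=\inf_{s\in S}\|s\|$. Standing parameter choice: $\epsilon\in(0,1)$, $\beta>1/2$, and $\delta,\tau,\eta$ satisfy $\delta=\frac{\tau L_\psi-L_h^-}{2[(1-\epsilon)+(1+\epsilon)\alpha_{\min}^2]}$, $\tau=\frac{2(L_h^-)^2+L_h^-+1+2(1+\epsilon)\delta}{2\rho}$, $\eta=\frac{2\beta-1}{2(1+\epsilon)}$, with $L_h^-<\tau L_\psi$. *)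

theory Defs
  imports "HOL-Analysis.Analysis"
begin

definition proper_fun :: "('a \<Rightarrow> ereal) \<Rightarrow> bool" where
  "proper_fun F \<longleftrightarrow> (\<forall>x. F x \<noteq> -\<infinity>) \<and> (\<exists>x. F x < \<infinity>)"

definition lsc_fun :: "('a::topological_space \<Rightarrow> ereal) \<Rightarrow> bool" where
  "lsc_fun F \<longleftrightarrow> (\<forall>x. F x \<le> Liminf (at x) F)"

definition convex_efun :: "('a::real_vector \<Rightarrow> ereal) \<Rightarrow> bool" where
  "convex_efun F \<longleftrightarrow> convex {(x, r::real). F x \<le> ereal r}"

definition conjugate :: "('a::real_inner \<Rightarrow> real) \<Rightarrow> 'a \<Rightarrow> ereal" where
  "conjugate g \<xi> = (SUP x. ereal (inner \<xi> x - g x))"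

definition strongly_convex :: "real \<Rightarrow> ('a::real_inner \<Rightarrow> real) \<Rightarrow> bool" where
  "strongly_convex \<rho> \<psi> \<longleftrightarrow> convex_on UNIV (\<lambda>x. \<psi> x - \<rho> / 2 * (norm x)\<^sup>2)"

definition bregman :: "('a::real_inner \<Rightarrow> real) \<Rightarrow> ('a \<Rightarrow> 'a) \<Rightarrow> 'a \<Rightarrow> 'a \<Rightarrow> real" where
  "bregman \<psi> D\<psi> x y = \<psi> x - \<psi> y - inner (D\<psi> y) (x - y)"

definition frechet_subdiff :: "('a::real_inner \<Rightarrow> ereal) \<Rightarrow> 'a \<Rightarrow> 'a set" where
  "frechet_subdiff F x = {v. \<bar>F x\<bar> \<noteq> \<infinity> \<and>
     (\<forall>\<epsilon>>0. \<exists>d>0. \<forall>y. norm (y - x) < d \<longrightarrow>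
        F y \<ge> F x + ereal (inner v (y - x) - \<epsilon> * norm (y - x)))}"

definition limiting_subdiff :: "('a::real_inner \<Rightarrow> ereal) \<Rightarrow> 'a \<Rightarrow> 'a set" where
  "limiting_subdiff F x = {v. \<bar>F x\<bar> \<noteq> \<infinity> \<and>
     (\<exists>X V. X \<longlonglongrightarrow> x \<and> (\<lambda>k. F (X k)) \<longlonglongrightarrow> F x \<and> V \<longlonglongrightarrow> v \<and>
            (\<forall>k. V k \<in> frechet_subdiff F (X k)))}"

end

theory Submission
  imports Defs
begin

text \<open>Split the merit function as \<open>\<Theta>hat = P\<^sub>k + T\<^sub>k\<close>, where \<open>P\<^sub>k\<close> is the sum of the two
  subproblem objectives of iteration \<open>k\<close> (in \<open>z\<close> and in \<open>\<zeta>\<close>) and \<open>T\<^sub>k\<close> is a smooth remainder in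
  which \<open>f\<close> and \<open>g\<^sup>*\<close> cancel. The iterate \<open>\<omega>\<^sup>k\<^sup>+\<^sup>1\<close> minimizes \<open>P\<^sub>k\<close>, so \<open>\<nabla>T\<^sub>k(\<omega>\<^sup>k\<^sup>+\<^sup>1)\<close>
  is a Frechet, hence limiting, subgradient of \<open>\<Theta>hat\<close> there, and it equals \<open>\<upsilon>\<^sup>k\<^sup>+\<^sup>1\<close> because
  \<open>x\<^sup>k\<^sup>+\<^sup>1 - xhat\<^sup>k\<^sup>+\<^sup>1 = \<alpha>\<^sub>k\<^sub>+\<^sub>1 (x\<^sup>k - x\<^sup>k\<^sup>+\<^sup>1)\<close>. The distance bound then follows from the
  Lipschitz continuity of \<open>\<nabla>h\<^sup>-\<close> and \<open>\<nabla>\<psi>\<close> and from \<open>\<alpha>\<^sub>k\<^sub>+\<^sub>1 \<ge> \<alpha>min\<close>.\<close>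

lemma frechet_subdiff_min_plus_differentiable:
  fixes F P :: "'b::real_inner \<Rightarrow> ereal" and T :: "'b \<Rightarrow> real"
  assumes F_eq: "\<And>y. F y = P y + ereal (T y)"
    and P_min: "\<And>y. P w \<le> P y" and P_finite: "\<bar>P w\<bar> \<noteq> \<infinity>"
    and T_deriv: "(T has_derivative (\<lambda>h. inner v h)) (at w)"
  shows "v \<in> frechet_subdiff F w"
proof -
  obtain p where p: "P w = ereal p" using P_finite by (cases "P w") auto
  have T_approx: "\<exists>d>0. \<forall>y. norm (y - w) < d \<longrightarrow> norm (T y - T w - inner v (y - w)) \<le> e * norm (y - w)"
    if "e > 0" for e
    using T_deriv that unfolding has_derivative_at_alt by blast
  show ?thesis unfolding frechet_subdiff_def
  proof (intro CollectI conjI allI impI)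
    show "\<bar>F w\<bar> \<noteq> \<infinity>" using F_eq[of w] p by simp
    fix e :: real assume "e > 0"
    then obtain d where "d > 0"
      and d: "\<And>y. norm (y - w) < d \<Longrightarrow> norm (T y - T w - inner v (y - w)) \<le> e * norm (y - w)"
      using T_approx by blast
    show "\<exists>d>0. \<forall>y. norm (y - w) < d \<longrightarrow> F w + ereal (inner v (y - w) - e * norm (y - w)) \<le> F y"
    proof (intro exI[of _ d] conjI allI impI \<open>d > 0\<close>)
      fix y assume "norm (y - w) < d"
      then have "T w + (inner v (y - w) - e * norm (y - w)) \<le> T y" using d[of y] by (simp add: abs_le_iff)
      then have "ereal p + ereal (T w + (inner v (y - w) - e * norm (y - w))) \<le> P y + ereal (T y)"
        using P_min[of y] p by (intro add_mono) auto
      then show "F w + ereal (inner v (y - w) - e * norm (y - w)) \<le> F y"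
        using F_eq[of w] F_eq[of y] p by (simp add: diff_add_eq add.assoc)
    qed
  qed
qed

lemma frechet_subdiff_subset_limiting_subdiff: "frechet_subdiff F w \<subseteq> limiting_subdiff F w"
  unfolding limiting_subdiff_def
  by (force simp: frechet_subdiff_def intro: exI[of _ "\<lambda>_. w"])

lemma conjugate_neq_minus_infinity: "conjugate g \<xi> \<noteq> -\<infinity>"
proof -
  have "ereal (inner \<xi> 0 - g 0) \<le> conjugate g \<xi>"
    unfolding conjugate_def by (rule SUP_upper) auto
  then show ?thesis by auto
qed

text \<open>A closed convex epigraph is strictly separated from a point below it; the slope of the
  separating hyperplane is a point where the conjugate is finite.\<close>
lemma ex_conjugate_less_infinity:
  fixes g :: "'a::euclidean_space \<Rightarrow> real"
  assumes "convex_on UNIV g" and "continuous_on UNIV g"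
  shows "\<exists>\<xi>. conjugate g \<xi> < \<infinity>"
proof -
  have "convex (epigraph UNIV g)" using assms(1) by (rule convex_epigraphI)
  moreover have "closed {p. g (fst p) \<le> snd p}"
    by (intro closed_Collect_le continuous_intros continuous_on_compose2[OF assms(2)]) auto
  then have "closed (epigraph UNIV g)" by (simp add: epigraph_def)
  moreover have "(0, g 0 - 1) \<notin> epigraph UNIV g" by (simp add: mem_epigraph)
  ultimately obtain a b where below: "inner a (0, g 0 - 1) < b"
    and above: "\<forall>p\<in>epigraph UNIV g. inner a p > b"
    using separating_hyperplane_closed_point by blast
  obtain a1 a2 where a: "a = (a1, a2)" by (cases a)
  have lower: "inner a1 z + a2 * g z > b" for z
    using above a mem_epigraph[of z "g z" UNIV g] by fastforce
  have "a2 * (g 0 - 1) < b" using below a by simp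
  then have "a2 > 0" using lower[of 0] by (simp add: algebra_simps)
  have "conjugate g (- (1 / a2) *\<^sub>R a1) \<le> ereal (- b / a2)"
    unfolding conjugate_def
  proof (rule SUP_least)
    fix z
    have "a2 * (inner (- (1 / a2) *\<^sub>R a1) z - g z) < - b"
      using lower[of z] \<open>a2 > 0\<close> by (simp add: algebra_simps)
    then show "ereal (inner (- (1 / a2) *\<^sub>R a1) z - g z) \<le> ereal (- b / a2)"
      using \<open>a2 > 0\<close> by (simp add: field_simps)
  qed
  then show ?thesis using le_less_trans by fastforce
qed

lemma norm_Pair4_le: "norm (a, b, c, e) \<le> norm a + norm b + norm c + norm e"
  using norm_Pair_le[of a "(b, c, e)"] norm_Pair_le[of b "(c, e)"] norm_Pair_le[of c e] by linarith

locale ibpdca_iteration =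
  fixes f :: "'a::euclidean_space \<Rightarrow> ereal"
    and g hp hm \<psi> :: "'a \<Rightarrow> real"
    and Dhm D\<psi> :: "'a \<Rightarrow> 'a"
    and Lhm L\<psi> \<tau> \<beta> :: real
    and \<alpha> :: "nat \<Rightarrow> real"
    and \<alpha>min :: real
    and x xi xhat :: "nat \<Rightarrow> 'a"
  assumes f_proper: "proper_fun f"
    and g_convex: "convex_on UNIV g" and g_cont: "continuous_on UNIV g"
    and hm_grad: "\<And>z. (hm has_derivative (\<lambda>v. inner (Dhm z) v)) (at z)"
    and hm_lip: "Lhm-lipschitz_on UNIV Dhm"
    and psi_grad: "\<And>z. (\<psi> has_derivative (\<lambda>v. inner (D\<psi> z) v)) (at z)"
    and psi_lip: "L\<psi>-lipschitz_on UNIV D\<psi>"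
    and amin_pos: "0 < \<alpha>min"
    and alpha_ge: "\<And>k. \<alpha>min \<le> \<alpha> k"
    and tau_pos: "\<tau> > 0"
    and xhat_def: "\<And>k. xhat k = x k + \<alpha> k *\<^sub>R (x k - x (k - 1))"
    and xi_step: "\<And>k \<zeta>. conjugate g (xi (Suc k)) - ereal (inner (xhat k) (xi (Suc k)))
                          + ereal (\<beta> / 2 * (norm (xi (Suc k) - xi k))\<^sup>2)
                       \<le> conjugate g \<zeta> - ereal (inner (xhat k) \<zeta>)
                          + ereal (\<beta> / 2 * (norm (\<zeta> - xi k))\<^sup>2)"
    and x_step: "\<And>k z. f (x (Suc k)) + ereal (hp (x (Suc k))
                          - inner (x (Suc k) - xhat k) (xi (Suc k) + Dhm (xhat k))
                          + \<tau> * bregman \<psi> D\<psi> (x (Suc k)) (xhat k))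
                       \<le> f z + ereal (hp z - inner (z - xhat k) (xi (Suc k) + Dhm (xhat k))
                          + \<tau> * bregman \<psi> D\<psi> z (xhat k))"
begin

definition x_objective :: "nat \<Rightarrow> 'a \<Rightarrow> ereal" where
  "x_objective k z = f z + ereal (hp z - inner (z - xhat k) (xi (Suc k) + Dhm (xhat k))
                                   + \<tau> * bregman \<psi> D\<psi> z (xhat k))"

definition xi_objective :: "nat \<Rightarrow> 'a \<Rightarrow> ereal" where
  "xi_objective k \<zeta> = conjugate g \<zeta> - ereal (inner (xhat k) \<zeta>) + ereal (\<beta> / 2 * (norm (\<zeta> - xi k))\<^sup>2)"

definition merit :: "real \<Rightarrow> real \<Rightarrow> 'a \<times> 'a \<times> 'a \<times> 'a \<Rightarrow> ereal" where
  "merit \<delta> \<eta> = (\<lambda>(z, \<zeta>, zh, \<zeta>'). f z + conjugate g \<zeta> + ereal (- inner \<zeta> z + hp z - hm z)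
                          + ereal (\<delta> * (norm (z - zh))\<^sup>2 + \<eta> * (norm (\<zeta> - \<zeta>'))\<^sup>2))"

definition merit_remainder :: "real \<Rightarrow> real \<Rightarrow> nat \<Rightarrow> 'a \<times> 'a \<times> 'a \<times> 'a \<Rightarrow> real" where
  "merit_remainder \<delta> \<eta> k w =
     - inner (fst (snd w)) (fst w) - hm (fst w)
     + \<delta> * inner (fst w - fst (snd (snd w))) (fst w - fst (snd (snd w)))
     + \<eta> * inner (fst (snd w) - snd (snd (snd w))) (fst (snd w) - snd (snd (snd w)))
     + inner (fst w - xhat k) (xi (Suc k) + Dhm (xhat k))
     - \<tau> * (\<psi> (fst w) - \<psi> (xhat k) - inner (D\<psi> (xhat k)) (fst w - xhat k))
     + inner (xhat k) (fst (snd w))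
     - \<beta> / 2 * inner (fst (snd w) - xi k) (fst (snd w) - xi k)"

definition subgradient :: "real \<Rightarrow> real \<Rightarrow> nat \<Rightarrow> 'a \<times> 'a \<times> 'a \<times> 'a" where
  "subgradient \<delta> \<eta> k =
     (Dhm (xhat k) - Dhm (x (Suc k)) + (2 * \<delta>) *\<^sub>R (x (Suc k) - xhat (Suc k))
        - \<tau> *\<^sub>R (D\<psi> (x (Suc k)) - D\<psi> (xhat k)),
      xhat k - x k + (1 / \<alpha> (Suc k)) *\<^sub>R (x (Suc k) - xhat (Suc k))
        + (2 * \<eta> - \<beta>) *\<^sub>R (xi (Suc k) - xi k),
      - ((2 * \<delta>) *\<^sub>R (x (Suc k) - xhat (Suc k))),
      (2 * \<eta>) *\<^sub>R (xi k - xi (Suc k)))"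

definition subgradient_bound :: "real \<Rightarrow> real \<Rightarrow> real" where
  "subgradient_bound \<delta> \<eta> =
     (Lhm + \<tau> * L\<psi> + 1) * (1 + 1 / \<alpha>min) + 4 * \<bar>\<delta>\<bar> + \<bar>2 * \<eta> - \<beta>\<bar> + 2 * \<bar>\<eta>\<bar>"

lemma merit_eq_objectives_plus_remainder:
  "merit \<delta> \<eta> w = x_objective k (fst w) + xi_objective k (fst (snd w)) + ereal (merit_remainder \<delta> \<eta> k w)"
proof -
  obtain z \<zeta> zh \<zeta>' where w: "w = (z, \<zeta>, zh, \<zeta>')" by (cases w) auto
  have "f z \<noteq> -\<infinity>" using f_proper by (simp add: proper_fun_def)
  then show ?thesis
    using conjugate_neq_minus_infinity[of g \<zeta>]
    unfolding w merit_def x_objective_def xi_objective_def merit_remainder_def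
    by (cases "f z"; cases "conjugate g \<zeta>") (auto simp: power2_norm_eq_inner bregman_def algebra_simps)
qed

lemma objectives_minimal:
  "x_objective k (x (Suc k)) \<le> x_objective k z" "xi_objective k (xi (Suc k)) \<le> xi_objective k \<zeta>"
  unfolding x_objective_def xi_objective_def by (fact x_step xi_step)+

lemma objectives_finite:
  "\<bar>x_objective k (x (Suc k))\<bar> \<noteq> \<infinity>" "\<bar>xi_objective k (xi (Suc k))\<bar> \<noteq> \<infinity>"
proof -
  obtain z where "f z < \<infinity>" using f_proper unfolding proper_fun_def by blast
  then have "x_objective k (x (Suc k)) < \<infinity>"
    using objectives_minimal(1)[of k z] by (auto simp: x_objective_def)
  moreover have "f (x (Suc k)) \<noteq> -\<infinity>" using f_proper by (simp add: proper_fun_def)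
  ultimately show "\<bar>x_objective k (x (Suc k))\<bar> \<noteq> \<infinity>"
    by (auto simp: x_objective_def)
  obtain \<zeta> where "conjugate g \<zeta> < \<infinity>" using ex_conjugate_less_infinity[OF g_convex g_cont] by blast
  then have "xi_objective k (xi (Suc k)) < \<infinity>"
    using objectives_minimal(2)[of k \<zeta>] by (cases "conjugate g \<zeta>") (auto simp: xi_objective_def)
  then show "\<bar>xi_objective k (xi (Suc k))\<bar> \<noteq> \<infinity>"
    using conjugate_neq_minus_infinity[of g "xi (Suc k)"]
    by (cases "conjugate g (xi (Suc k))") (auto simp: xi_objective_def)
qed

lemma merit_remainder_has_derivative:
  "(merit_remainder \<delta> \<eta> k has_derivative (\<lambda>h. inner
     (xi (Suc k) - \<zeta> + Dhm (xhat k) - Dhm z + (2 * \<delta>) *\<^sub>R (z - zh) - \<tau> *\<^sub>R (D\<psi> z - D\<psi> (xhat k)),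
      xhat k - z + (2 * \<eta>) *\<^sub>R (\<zeta> - \<zeta>') - \<beta> *\<^sub>R (\<zeta> - xi k),
      - ((2 * \<delta>) *\<^sub>R (z - zh)),
      (2 * \<eta>) *\<^sub>R (\<zeta>' - \<zeta>)) h)) (at (z, \<zeta>, zh, \<zeta>'))"
proof -
  have comp_fst: "((\<lambda>w. F (fst w)) has_derivative (\<lambda>h. inner (DF (fst w)) (fst h))) (at w)"
    if "\<And>z. (F has_derivative (\<lambda>v. inner (DF z) v)) (at z)" for F :: "'a \<Rightarrow> real" and DF w
    using has_derivative_compose[OF has_derivative_fst[OF has_derivative_ident] that, of w UNIV] by simp
  show ?thesis
    unfolding merit_remainder_def[abs_def]
    apply (rule has_derivative_eq_rhs)
     apply (rule derivative_eq_intros comp_fst[OF hm_grad] comp_fst[OF psi_grad] | simp)+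
    apply (rule ext)
    apply (clarsimp simp: inner_Pair algebra_simps inner_commute)
    apply (simp add: field_simps)
    done
qed

lemma alpha_pos: "\<alpha> k > 0"
  using amin_pos alpha_ge[of k] by linarith

lemma scaled_extrapolation_gap: "(1 / \<alpha> (Suc k)) *\<^sub>R (x (Suc k) - xhat (Suc k)) = x k - x (Suc k)"
proof -
  have "x (Suc k) - xhat (Suc k) = \<alpha> (Suc k) *\<^sub>R (x k - x (Suc k))"
    using xhat_def[of "Suc k"] by (simp add: algebra_simps)
  then show ?thesis using alpha_pos[of "Suc k"] by simp
qed

lemma subgradient_eq:
  "subgradient \<delta> \<eta> k =
     (Dhm (xhat k) - Dhm (x (Suc k)) + (2 * \<delta>) *\<^sub>R (x (Suc k) - xhat (Suc k))
        - \<tau> *\<^sub>R (D\<psi> (x (Suc k)) - D\<psi> (xhat k)),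
      xhat k - x (Suc k) + (2 * \<eta> - \<beta>) *\<^sub>R (xi (Suc k) - xi k),
      - ((2 * \<delta>) *\<^sub>R (x (Suc k) - xhat (Suc k))),
      (2 * \<eta>) *\<^sub>R (xi k - xi (Suc k)))"
  unfolding subgradient_def scaled_extrapolation_gap by simp

lemma subgradient_in_frechet_subdiff:
  "subgradient \<delta> \<eta> k \<in> frechet_subdiff (merit \<delta> \<eta>) (x (Suc k), xi (Suc k), xhat (Suc k), xi k)"
proof (rule frechet_subdiff_min_plus_differentiable)
  let ?P = "\<lambda>w. x_objective k (fst w) + xi_objective k (fst (snd w))"
  show "merit \<delta> \<eta> w = ?P w + ereal (merit_remainder \<delta> \<eta> k w)" for w
    by (rule merit_eq_objectives_plus_remainder)
  show "?P (x (Suc k), xi (Suc k), xhat (Suc k), xi k) \<le> ?P w" for w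
    using objectives_minimal by (simp add: add_mono)
  show "\<bar>?P (x (Suc k), xi (Suc k), xhat (Suc k), xi k)\<bar> \<noteq> \<infinity>"
    using objectives_finite[of k] by auto
  show "(merit_remainder \<delta> \<eta> k has_derivative (\<lambda>h. inner (subgradient \<delta> \<eta> k) h))
          (at (x (Suc k), xi (Suc k), xhat (Suc k), xi k))"
    using merit_remainder_has_derivative
            [where \<delta> = \<delta> and \<eta> = \<eta> and k = k
               and z = "x (Suc k)" and \<zeta> = "xi (Suc k)" and zh = "xhat (Suc k)" and \<zeta>' = "xi k"]
    by (simp add: subgradient_eq algebra_simps)
qed

lemma norm_xhat_minus_x_Suc_le:
  "norm (xhat k - x (Suc k)) \<le> norm (x k - xhat k) + norm (x (Suc k) - xhat (Suc k)) / \<alpha>min"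
proof -
  have "norm (x k - x (Suc k)) = norm (x (Suc k) - xhat (Suc k)) / \<alpha> (Suc k)"
    using alpha_pos[of "Suc k"] by (simp flip: scaled_extrapolation_gap)
  also have "\<dots> \<le> norm (x (Suc k) - xhat (Suc k)) / \<alpha>min"
    using amin_pos alpha_ge[of "Suc k"] by (intro divide_left_mono) auto
  finally show ?thesis
    using norm_triangle_ineq[of "xhat k - x k" "x k - x (Suc k)"] by (simp add: norm_minus_commute)
qed

lemma gradient_lipschitz_sum_nonneg: "0 \<le> Lhm + \<tau> * L\<psi>"
  using lipschitz_on_nonneg[OF hm_lip] lipschitz_on_nonneg[OF psi_lip] tau_pos by simp

lemma subgradient_bound_pos: "subgradient_bound \<delta> \<eta> > 0"
proof -
  have "(Lhm + \<tau> * L\<psi> + 1) * (1 + 1 / \<alpha>min) > 0"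
    using gradient_lipschitz_sum_nonneg amin_pos by (simp add: add_pos_pos)
  then show ?thesis
    unfolding subgradient_bound_def
    using abs_ge_zero[of \<delta>] abs_ge_zero[of \<eta>] abs_ge_zero[of "2 * \<eta> - \<beta>"] by linarith
qed

lemma norm_subgradient_le:
  "norm (subgradient \<delta> \<eta> k) \<le> subgradient_bound \<delta> \<eta>
     * (norm (x k - xhat k) + norm (x (Suc k) - xhat (Suc k)) + norm (xi (Suc k) - xi k))"
proof -
  define A where "A = norm (x k - xhat k)"
  define B where "B = norm (x (Suc k) - xhat (Suc k))"
  define C where "C = norm (xi (Suc k) - xi k)"
  define d where "d = xhat k - x (Suc k)"
  define M where "M = Lhm + \<tau> * L\<psi>"
  define \<theta> where "\<theta> = subgradient_bound \<delta> \<eta>"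
  have "M \<ge> 0" unfolding M_def by (rule gradient_lipschitz_sum_nonneg)
  have d_le: "norm d \<le> A + B / \<alpha>min"
    unfolding d_def A_def B_def by (rule norm_xhat_minus_x_Suc_le)
  have "norm (Dhm (xhat k) - Dhm (x (Suc k))) \<le> Lhm * norm d"
    unfolding d_def by (rule lipschitz_on_normD[OF hm_lip]) auto
  moreover have "norm (D\<psi> (x (Suc k)) - D\<psi> (xhat k)) \<le> L\<psi> * norm d"
    unfolding d_def by (subst norm_minus_commute, rule lipschitz_on_normD[OF psi_lip]) auto
  ultimately have x_part: "norm (fst (subgradient \<delta> \<eta> k)) \<le> M * norm d + 2 * \<bar>\<delta>\<bar> * B"
  proof -
    assume Lhm_bound: "norm (Dhm (xhat k) - Dhm (x (Suc k))) \<le> Lhm * norm d"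
      and Lpsi_bound: "norm (D\<psi> (x (Suc k)) - D\<psi> (xhat k)) \<le> L\<psi> * norm d"
    have "norm (fst (subgradient \<delta> \<eta> k))
          \<le> norm (Dhm (xhat k) - Dhm (x (Suc k))) + 2 * \<bar>\<delta>\<bar> * B
             + \<tau> * norm (D\<psi> (x (Suc k)) - D\<psi> (xhat k))"
      unfolding subgradient_eq B_def using tau_pos
      by (simp add: abs_mult norm_triangle_le norm_triangle_ineq4 order_trans[OF norm_triangle_ineq4] add_mono norm_triangle_ineq)
    also have "\<dots> \<le> Lhm * norm d + 2 * \<bar>\<delta>\<bar> * B + \<tau> * (L\<psi> * norm d)"
      using Lhm_bound Lpsi_bound tau_pos by (intro add_mono mult_left_mono) auto
    finally show ?thesis by (simp add: M_def algebra_simps)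
  qed
  have xi_part: "norm (fst (snd (subgradient \<delta> \<eta> k))) \<le> norm d + \<bar>2 * \<eta> - \<beta>\<bar> * C"
    unfolding subgradient_eq d_def C_def by (simp add: norm_triangle_le)
  have "norm (subgradient \<delta> \<eta> k) \<le> M * norm d + 2 * \<bar>\<delta>\<bar> * B + (norm d + \<bar>2 * \<eta> - \<beta>\<bar> * C)
          + (2 * \<bar>\<delta>\<bar> * B + 2 * \<bar>\<eta>\<bar> * C)"
  proof -
    have "norm (subgradient \<delta> \<eta> k) \<le> norm (fst (subgradient \<delta> \<eta> k))
            + norm (fst (snd (subgradient \<delta> \<eta> k))) + norm (fst (snd (snd (subgradient \<delta> \<eta> k))))
            + norm (snd (snd (snd (subgradient \<delta> \<eta> k))))"
      using norm_Pair4_le[of "fst (subgradient \<delta> \<eta> k)" "fst (snd (subgradient \<delta> \<eta> k))"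
          "fst (snd (snd (subgradient \<delta> \<eta> k)))" "snd (snd (snd (subgradient \<delta> \<eta> k)))"]
      by simp
    moreover have "norm (fst (snd (snd (subgradient \<delta> \<eta> k)))) = 2 * \<bar>\<delta>\<bar> * B"
      unfolding subgradient_eq B_def by (simp add: abs_mult)
    moreover have "norm (snd (snd (snd (subgradient \<delta> \<eta> k)))) = 2 * \<bar>\<eta>\<bar> * C"
      unfolding subgradient_eq C_def by (simp add: abs_mult norm_minus_commute)
    ultimately show ?thesis using x_part xi_part by linarith
  qed
  also have "\<dots> \<le> (M + 1) * (A + B / \<alpha>min) + 4 * \<bar>\<delta>\<bar> * B + (\<bar>2 * \<eta> - \<beta>\<bar> + 2 * \<bar>\<eta>\<bar>) * C"
  proof -
    have "(M + 1) * norm d \<le> (M + 1) * (A + B / \<alpha>min)"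
      using d_le \<open>M \<ge> 0\<close> by (intro mult_left_mono) auto
    then show ?thesis by (simp add: algebra_simps)
  qed
  also have "\<dots> = (M + 1) * A + ((M + 1) / \<alpha>min + 4 * \<bar>\<delta>\<bar>) * B + (\<bar>2 * \<eta> - \<beta>\<bar> + 2 * \<bar>\<eta>\<bar>) * C"
    by (simp add: algebra_simps)
  also have "\<dots> \<le> \<theta> * A + \<theta> * B + \<theta> * C"
  proof -
    have "(M + 1) / \<alpha>min \<ge> 0" using \<open>M \<ge> 0\<close> amin_pos by simp
    moreover have "(M + 1) * (1 + 1 / \<alpha>min) = (M + 1) + (M + 1) / \<alpha>min" by (simp add: algebra_simps)
    ultimately have "M + 1 \<le> \<theta>" "(M + 1) / \<alpha>min + 4 * \<bar>\<delta>\<bar> \<le> \<theta>" "\<bar>2 * \<eta> - \<beta>\<bar> + 2 * \<bar>\<eta>\<bar> \<le> \<theta>"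
      unfolding \<theta>_def subgradient_bound_def M_def[symmetric] using \<open>M \<ge> 0\<close>
        abs_ge_zero[of \<delta>] abs_ge_zero[of \<eta>] abs_ge_zero[of "2 * \<eta> - \<beta>"]
      by linarith+
    then show ?thesis by (intro add_mono mult_right_mono) (auto simp: A_def B_def C_def)
  qed
  also have "\<dots> = \<theta> * (A + B + C)" by (simp add: algebra_simps)
  finally show ?thesis unfolding A_def B_def C_def \<theta>_def .
qed

end

theorem lemma3p3:
  fixes f :: "'a::euclidean_space \<Rightarrow> ereal"
    and g hp hm \<psi> :: "'a \<Rightarrow> real"
    and Dhp Dhm D\<psi> :: "'a \<Rightarrow> 'a"
    and Lhp Lhm L\<psi> \<rho> :: real
    and x xi xhat :: "nat \<Rightarrow> 'a"
    and \<alpha> :: "nat \<Rightarrow> real"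
    and \<alpha>min \<beta> \<tau> \<delta> \<eta> \<epsilon> :: real
  assumes f_proper: "proper_fun f" and f_lsc: "lsc_fun f" and f_convex: "convex_efun f"
    and g_convex: "convex_on UNIV g" and g_cont: "continuous_on UNIV g"
    and hp_grad: "\<And>z. (hp has_derivative (\<lambda>v. inner (Dhp z) v)) (at z)"
    and hm_grad: "\<And>z. (hm has_derivative (\<lambda>v. inner (Dhm z) v)) (at z)"
    and hp_lip: "Lhp-lipschitz_on UNIV Dhp"
    and hm_lip: "Lhm-lipschitz_on UNIV Dhm"
    and Phi_bdd: "\<exists>c::real. \<forall>z. f z - ereal (g z) + ereal (hp z - hm z) \<ge> ereal c"
    and psi_grad: "\<And>z. (\<psi> has_derivative (\<lambda>v. inner (D\<psi> z) v)) (at z)"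
    and rho_pos: "\<rho> > 0" and psi_sc: "strongly_convex \<rho> \<psi>"
    and psi_lip: "L\<psi>-lipschitz_on UNIV D\<psi>"
    and amin: "0 < \<alpha>min" "\<alpha>min < 1"
    and alpha_range: "\<And>k. \<alpha>min \<le> \<alpha> k \<and> \<alpha> k \<le> 1"
    and beta: "\<beta> > 1/2" and tau_pos: "\<tau> > 0"
    and xhat_def: "\<And>k. xhat k = x k + \<alpha> k *\<^sub>R (x k - x (k - 1))"
    and xi_step: "\<And>k \<zeta>. conjugate g (xi (Suc k)) - ereal (inner (xhat k) (xi (Suc k)))
                          + ereal (\<beta> / 2 * (norm (xi (Suc k) - xi k))\<^sup>2)
                       \<le> conjugate g \<zeta> - ereal (inner (xhat k) \<zeta>)
                          + ereal (\<beta> / 2 * (norm (\<zeta> - xi k))\<^sup>2)"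
    and x_step: "\<And>k z. f (x (Suc k)) + ereal (hp (x (Suc k))
                          - inner (x (Suc k) - xhat k) (xi (Suc k) + Dhm (xhat k))
                          + \<tau> * bregman \<psi> D\<psi> (x (Suc k)) (xhat k))
                       \<le> f z + ereal (hp z - inner (z - xhat k) (xi (Suc k) + Dhm (xhat k))
                          + \<tau> * bregman \<psi> D\<psi> z (xhat k))"
    and eps: "0 < \<epsilon>" "\<epsilon> < 1"
    and delta_def: "\<delta> = (\<tau> * L\<psi> - Lhm) / (2 * ((1 - \<epsilon>) + (1 + \<epsilon>) * \<alpha>min\<^sup>2))"
    and tau_def: "\<tau> = (2 * Lhm\<^sup>2 + Lhm + 1 + 2 * (1 + \<epsilon>) * \<delta>) / (2 * \<rho>)"
    and eta_def: "\<eta> = (2 * \<beta> - 1) / (2 * (1 + \<epsilon>))"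
    and Lhm_lt: "Lhm < \<tau> * L\<psi>"
    and bounded: "bounded (range (\<lambda>k. (x k, xi k, xhat k, xi (k - 1))))"
  shows "let \<Theta> = (\<lambda>(z, \<zeta>). f z + conjugate g \<zeta> + ereal (- inner \<zeta> z + hp z - hm z));
             \<Theta>hat = (\<lambda>(z, \<zeta>, zh, \<zeta>'). \<Theta> (z, \<zeta>)
                       + ereal (\<delta> * (norm (z - zh))\<^sup>2 + \<eta> * (norm (\<zeta> - \<zeta>'))\<^sup>2));
             \<omega> = (\<lambda>k. (x k, xi k, xhat k, xi (k - 1)));
             \<upsilon> = (\<lambda>k. (Dhm (xhat k) - Dhm (x (Suc k)) + (2 * \<delta>) *\<^sub>R (x (Suc k) - xhat (Suc k))
                          - \<tau> *\<^sub>R (D\<psi> (x (Suc k)) - D\<psi> (xhat k)),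
                        xhat k - x k + (1 / \<alpha> (Suc k)) *\<^sub>R (x (Suc k) - xhat (Suc k))
                          + (2 * \<eta> - \<beta>) *\<^sub>R (xi (Suc k) - xi k),
                        - ((2 * \<delta>) *\<^sub>R (x (Suc k) - xhat (Suc k))),
                        (2 * \<eta>) *\<^sub>R (xi k - xi (Suc k))))
         in (\<forall>k. \<upsilon> k \<in> limiting_subdiff \<Theta>hat (\<omega> (Suc k))) \<and>
            (\<exists>\<theta>>0. \<forall>k. infdist 0 (limiting_subdiff \<Theta>hat (\<omega> (Suc k)))
                 \<le> \<theta> * (norm (x k - xhat k) + norm (x (Suc k) - xhat (Suc k))
                          + norm (xi (Suc k) - xi k)))"
proof -
  interpret ibpdca_iteration f g hp hm \<psi> Dhm D\<psi> Lhm L\<psi> \<tau> \<beta> \<alpha> \<alpha>min x xi xhat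
    using f_proper g_convex g_cont hm_grad hm_lip psi_grad psi_lip amin(1)
        alpha_range[THEN conjunct1] tau_pos xhat_def xi_step x_step
    by (rule ibpdca_iteration.intro)
  have mem: "subgradient \<delta> \<eta> k \<in> limiting_subdiff (merit \<delta> \<eta>) (x (Suc k), xi (Suc k), xhat (Suc k), xi k)" for k
    using subgradient_in_frechet_subdiff frechet_subdiff_subset_limiting_subdiff by blast
  have "infdist 0 (limiting_subdiff (merit \<delta> \<eta>) (x (Suc k), xi (Suc k), xhat (Suc k), xi k))
          \<le> subgradient_bound \<delta> \<eta>
             * (norm (x k - xhat k) + norm (x (Suc k) - xhat (Suc k)) + norm (xi (Suc k) - xi k))" for k
    using infdist_le[OF mem[of k], of 0] norm_subgradient_le[of \<delta> \<eta> k] by simp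
  then show ?thesis
    unfolding Let_def using mem subgradient_bound_pos[of \<delta> \<eta>] by (simp add: merit_def subgradient_def) blast
qed

end
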